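(* Let $k\ge2$, $0\le\alpha<1$, and let $G$ be a connected $k$-uniform hypergraph on $n$ vertices with $m$ edges, degrees $d_i$ ($i\in V(G)$) and maximum degree $\Delta$. Let $x$ be the $\alpha$-Perron vector of $G$ and $\overline{x}=\max_i x_i$. Then \[\rho_\alpha(G)\le\alpha\Delta+(1-\alpha)km\,\overline{x}^{\,k}\] and \[\rho_\alpha(G)\le\alpha\Delta+(1-\alpha)\Big(\sum_{i\in V(G)}d_i^{\frac{k}{k-1}}\Big)^{\frac{k-1}{k}}\overline{x}^{\,k-1},\] and equality holds in either inequality if and only if $G$ is regular.
   Context: Hypergraphs are finite with edges being sets; $k$-uniform means every edge has $k$ vertices; $d_i$ is the number of edges containing $i$; regular means all degrees equal. $\mathcal A(G)$ is the order-$k$ dimension-$n$ tensor with $(i_1,\dots,i_k)$-entry $\frac1{(k-1)!}$ if $\{i_1,\dots,i_k\}\in E(G)$, $0$ otherwise; $\mathcal D(G)$ is the diagonal tensor with $(i,\dots,i)$-entry $d_i$; $\mathcal A_\alpha(G)=\alpha\mathcal D(G)+(1-\alpha)\mathcal A(G)$. For an order-$k$ tensor $\mathcal T$, $(\mathcal Tx)_i=\sum_{i_2,\dots,i_k}\mathcal T_{ii_2\dots i_k}x_{i_2}\cdots x_{i_k}$; $\lambda$ is an eigenvalue if $\mathcal Tx=\lambda x^{[k-1]}$ for some $x\neq 0$, where $x^{[k-1]}=(x_i^{k-1})_i$. $\rho_\alpha(G)$ is the largest modulus of an eigenvalue of $\mathcal A_\alpha(G)$. A path is an alternating sequence of distinct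 vertices and distinct edges $(v_0,e_1,\dots,e_s,v_s)$ with $v_{i-1},v_i\in e_i$; $G$ is connected if any two vertices are joined by a path. For connected $G$, the $\alpha$-Perron vector of $G$ is the unique vector $x$ with all entries positive, $\sum_i x_i^k=1$, and $\mathcal A_\alpha(G)x=\rho_\alpha(G)x^{[k-1]}$. *)

theory Defs
  imports "HOL-Analysis.Analysis"
begin

definition k_uniform_hypergraph :: "nat \<Rightarrow> 'a set \<Rightarrow> 'a set set \<Rightarrow> bool" where
  "k_uniform_hypergraph k V E \<longleftrightarrow> finite V \<and> (\<forall>e\<in>E. e \<subseteq> V \<and> card e = k)"

definition hg_degree :: "'a set set \<Rightarrow> 'a \<Rightarrow> nat" where
  "hg_degree E i = card {e\<in>E. i \<in> e}"

definition hg_max_degree :: "'a set \<Rightarrow> 'a set set \<Rightarrow> nat" where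
  "hg_max_degree V E = Max (hg_degree E ` V)"

definition hg_regular :: "'a set \<Rightarrow> 'a set set \<Rightarrow> bool" where
  "hg_regular V E \<longleftrightarrow> (\<forall>i\<in>V. \<forall>j\<in>V. hg_degree E i = hg_degree E j)"

definition hg_path :: "'a set set \<Rightarrow> 'a list \<Rightarrow> 'a set list \<Rightarrow> bool" where
  "hg_path E vs es \<longleftrightarrow> length vs = length es + 1 \<and> distinct vs \<and> distinct es \<and>
     (\<forall>i<length es. es ! i \<in> E \<and> vs ! i \<in> es ! i \<and> vs ! (i+1) \<in> es ! i)"

definition hg_connected :: "'a set \<Rightarrow> 'a set set \<Rightarrow> bool" where
  "hg_connected V E \<longleftrightarrow> (\<forall>u\<in>V. \<forall>v\<in>V. \<exists>vs es. hg_path E vs es \<and> hd vs = u \<and> last vs = v)"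

text \<open>Order-k tensors of dimension V: real-valued functions on index lists (only lists of
  length k with entries in V matter).\<close>

definition adj_tensor :: "nat \<Rightarrow> 'a set set \<Rightarrow> 'a list \<Rightarrow> real" where
  "adj_tensor k E is = (if length is = k \<and> set is \<in> E then 1 / fact (k - 1) else 0)"

definition deg_tensor :: "nat \<Rightarrow> 'a set set \<Rightarrow> 'a list \<Rightarrow> real" where
  "deg_tensor k E is = (if length is = k \<and> is \<noteq> [] \<and> (\<forall>j\<in>set is. j = hd is)
      then real (hg_degree E (hd is)) else 0)"

definition A_alpha_tensor :: "real \<Rightarrow> nat \<Rightarrow> 'a set set \<Rightarrow> 'a list \<Rightarrow> real" where
  "A_alpha_tensor \<alpha> k E is = \<alpha> * deg_tensor k E is + (1 - \<alpha>) * adj_tensor k E is"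

definition tensor_apply :: "'a set \<Rightarrow> nat \<Rightarrow> ('a list \<Rightarrow> real) \<Rightarrow> ('a \<Rightarrow> complex) \<Rightarrow> 'a \<Rightarrow> complex" where
  "tensor_apply V k T x i =
     (\<Sum>ys\<in>{ys. set ys \<subseteq> V \<and> length ys = k - 1}. complex_of_real (T (i # ys)) * prod_list (map x ys))"

definition tensor_eigenvalue :: "'a set \<Rightarrow> nat \<Rightarrow> ('a list \<Rightarrow> real) \<Rightarrow> complex \<Rightarrow> bool" where
  "tensor_eigenvalue V k T \<mu> \<longleftrightarrow>
     (\<exists>x. (\<exists>i\<in>V. x i \<noteq> 0) \<and> (\<forall>i\<in>V. tensor_apply V k T x i = \<mu> * x i ^ (k - 1)))"

definition tensor_spectral_radius :: "'a set \<Rightarrow> nat \<Rightarrow> ('a list \<Rightarrow> real) \<Rightarrow> real" where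
  "tensor_spectral_radius V k T = Sup {cmod \<mu> | \<mu>. tensor_eigenvalue V k T \<mu>}"

definition rho_alpha :: "real \<Rightarrow> nat \<Rightarrow> 'a set \<Rightarrow> 'a set set \<Rightarrow> real" where
  "rho_alpha \<alpha> k V E = tensor_spectral_radius V k (A_alpha_tensor \<alpha> k E)"

definition alpha_perron_vector :: "real \<Rightarrow> nat \<Rightarrow> 'a set \<Rightarrow> 'a set set \<Rightarrow> ('a \<Rightarrow> real) \<Rightarrow> bool" where
  "alpha_perron_vector \<alpha> k V E x \<longleftrightarrow>
     (\<forall>i\<in>V. x i > 0) \<and> (\<Sum>i\<in>V. x i ^ k) = 1 \<and>
     (\<forall>i\<in>V. tensor_apply V k (A_alpha_tensor \<alpha> k E) (\<lambda>j. complex_of_real (x j)) i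
               = complex_of_real (rho_alpha \<alpha> k V E * x i ^ (k - 1)))"

end

theory Submission
  imports Defs "HOL-Combinatorics.Multiset_Permutations"
begin

text \<open>Multiplying the eigen-equation at each vertex i by x_i and summing gives
  \<rho> = \<alpha> \<Sum> d_i x_i^k + (1 - \<alpha>) \<Sum>_i x_i \<Sum>_{e \<ni> i} x^{e - {i}}.
  The first sum is at most \<Delta>, and each monomial x^{e - {i}} is at most xbar^(k-1), so
  \<rho> \<le> \<alpha> \<Delta> + (1 - \<alpha>) xbar^(k-1) \<Sum> d_i x_i; the last sum is at most k m xbar by the
  handshake identity, and at most the k/(k-1)-norm of the degrees by Hoelder's inequality
  (as \<Sum> x_i^k = 1).

  Equality forces every monomial x^{e - {i}} to equal xbar^(k-1); since every edge through a
  non-isolated vertex contains a second vertex, all non-isolated vertices carry xbar, and the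
  eigen-equation then gives d_i = \<rho> at every vertex. Conversely, for a regular hypergraph
  comparing the eigen-equation at a maximal and a minimal entry of x gives \<rho> = \<Delta>; then
  the maximal entries propagate along edges, so by connectivity x is constant and both bounds
  evaluate to \<Delta>.\<close>

lemma k_uniform_hypergraph_finite_edges:
  "k_uniform_hypergraph k V E \<Longrightarrow> finite E"
  unfolding k_uniform_hypergraph_def by (intro finite_subset[of E "Pow V"]) auto

lemma hg_degree_eq_sum_of_bool:
  "finite E \<Longrightarrow> hg_degree E i = (\<Sum>e\<in>E. of_bool (i \<in> e))"
  unfolding hg_degree_def by (simp add: Int_def conj_commute)

lemma sum_hg_degree:
  assumes "k_uniform_hypergraph k V E"
  shows "(\<Sum>i\<in>V. hg_degree E i) = k * card E"
proof -
  have fin: "finite V" "finite E" and edge: "\<And>e. e \<in> E \<Longrightarrow> e \<subseteq> V \<and> card e = k"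
    using assms k_uniform_hypergraph_finite_edges unfolding k_uniform_hypergraph_def by auto
  have "(\<Sum>i\<in>V. hg_degree E i) = (\<Sum>i\<in>V. \<Sum>e\<in>E. of_bool (i \<in> e))"
    by (rule sum.cong[OF refl], rule hg_degree_eq_sum_of_bool[OF fin(2)])
  also have "\<dots> = (\<Sum>e\<in>E. \<Sum>i\<in>V. of_bool (i \<in> e))"
    by (rule sum.swap)
  also have "\<dots> = (\<Sum>e\<in>E. k)"
  proof (rule sum.cong[OF refl])
    fix e assume "e \<in> E"
    then have "V \<inter> {i. i \<in> e} = e" using edge by auto
    then show "(\<Sum>i\<in>V. of_bool (i \<in> e)) = k" using fin edge \<open>e \<in> E\<close> by simp
  qed
  finally show ?thesis by simp
qed

lemma max_degree_eq_if_regular: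
  assumes "finite V" "hg_regular V E" "i \<in> V"
  shows "hg_max_degree V E = hg_degree E i"
proof -
  have "hg_degree E j = hg_degree E i" if "j \<in> V" for j
    using assms(2,3) that unfolding hg_regular_def by blast
  then have "hg_degree E ` V = {hg_degree E i}"
    using assms(3) by blast
  then show ?thesis unfolding hg_max_degree_def by simp
qed

lemma hg_path_propagate:
  assumes path: "hg_path E vs es" and start: "P (hd vs)"
    and step: "\<And>i e j. P i \<Longrightarrow> e \<in> E \<Longrightarrow> i \<in> e \<Longrightarrow> j \<in> e \<Longrightarrow> P j"
  shows "P (last vs)"
proof -
  have len: "length vs = length es + 1" using path unfolding hg_path_def by auto
  have "P (vs ! t)" if "t < length vs" for t
    using that
  proof (induction t)
    case 0
    then show ?case using start by (simp add: hd_conv_nth)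
  next
    case (Suc t)
    then have "t < length es" using len by simp
    then have "es ! t \<in> E" "vs ! t \<in> es ! t" "vs ! Suc t \<in> es ! t"
      using path unfolding hg_path_def by auto
    then show ?case using step Suc by simp
  qed
  moreover have "vs \<noteq> []" using len by auto
  ultimately show ?thesis using len by (simp add: last_conv_nth)
qed

lemma hg_connected_propagate:
  assumes conn: "hg_connected V E" and edges: "\<And>e. e \<in> E \<Longrightarrow> e \<subseteq> V"
    and u: "u \<in> V" "P u" and v: "v \<in> V"
    and step: "\<And>i e j. i \<in> V \<Longrightarrow> P i \<Longrightarrow> e \<in> E \<Longrightarrow> i \<in> e \<Longrightarrow> j \<in> e \<Longrightarrow> P j"
  shows "P v"
proof -
  obtain vs es where path: "hg_path E vs es" and "hd vs = u" "last vs = v"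
    using conn u v unfolding hg_connected_def by blast
  have "last vs \<in> V \<and> P (last vs)"
  proof (rule hg_path_propagate[OF path])
    show "hd vs \<in> V \<and> P (hd vs)" using \<open>hd vs = u\<close> u by simp
  next
    fix i e j assume "i \<in> V \<and> P i" "e \<in> E" "i \<in> e" "j \<in> e"
    then show "j \<in> V \<and> P j" using edges step by blast
  qed
  then show ?thesis using \<open>last vs = v\<close> by simp
qed

definition link_sum :: "'a set set \<Rightarrow> ('a \<Rightarrow> real) \<Rightarrow> 'a \<Rightarrow> real" where
  "link_sum E x i = (\<Sum>e\<in>{e\<in>E. i \<in> e}. prod x (e - {i}))"

lemma prod_list_of_real:
  "prod_list (map (\<lambda>j. of_real (x j)) ys) = (of_real (prod_list (map x ys)) :: 'b :: real_algebra_1)"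
  by (induction ys) auto

lemma tensor_apply_of_real:
  "tensor_apply V k T (\<lambda>j. complex_of_real (x j)) i =
   complex_of_real (\<Sum>ys\<in>{ys. set ys \<subseteq> V \<and> length ys = k - 1}. T (i # ys) * prod_list (map x ys))"
  unfolding tensor_apply_def by (simp add: prod_list_of_real)

lemma deg_tensor_contract:
  assumes "finite V" "i \<in> V" "k \<ge> 1"
  shows "(\<Sum>ys\<in>{ys. set ys \<subseteq> V \<and> length ys = k - 1}. deg_tensor k E (i # ys) * prod_list (map x ys))
     = real (hg_degree E i) * x i ^ (k - 1)"
proof -
  let ?L = "{ys. set ys \<subseteq> V \<and> length ys = k - 1}"
  let ?r = "replicate (k - 1) i"
  have "deg_tensor k E (i # ys) * prod_list (map x ys)
     = (if ys = ?r then real (hg_degree E i) * x i ^ (k - 1) else 0)" if "ys \<in> ?L" for ys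
  proof -
    have len: "length ys = k - 1" using that by auto
    then have "(\<forall>j\<in>set ys. j = i) \<longleftrightarrow> ys = ?r"
      by (metis in_set_replicate replicate_eqI)
    then show ?thesis
      unfolding deg_tensor_def using len assms(3) by (auto simp: prod_list_replicate)
  qed
  then have "(\<Sum>ys\<in>?L. deg_tensor k E (i # ys) * prod_list (map x ys))
      = (\<Sum>ys\<in>?L. if ys = ?r then real (hg_degree E i) * x i ^ (k - 1) else 0)"
    by (rule sum.cong[OF refl])
  moreover have "?r \<in> ?L" "finite ?L"
    using assms by (auto simp: finite_lists_length_eq)
  ultimately show ?thesis by simp
qed

text \<open>The index lists contributing at vertex i are exactly the orderings of e - {i} for the
  edges e through i; the (k - 1)! orderings of each edge cancel the normalisation of the
  adjacency tensor.\<close>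
lemma adj_tensor_contract:
  assumes uniform: "k_uniform_hypergraph k V E" and k: "k \<ge> 1"
  shows "(\<Sum>ys\<in>{ys. set ys \<subseteq> V \<and> length ys = k - 1}. adj_tensor k E (i # ys) * prod_list (map x ys))
     = link_sum E x i"
proof -
  let ?L = "{ys. set ys \<subseteq> V \<and> length ys = k - 1}"
  let ?Ei = "{e\<in>E. i \<in> e}"
  let ?c = "1 / fact (k - 1) :: real"
  have finV: "finite V" and edge: "\<And>e. e \<in> E \<Longrightarrow> e \<subseteq> V \<and> card e = k"
    using uniform unfolding k_uniform_hypergraph_def by auto
  have finite_link: "finite (e - {i})" and card_link: "card (e - {i}) = k - 1" if "e \<in> ?Ei" for e
    using edge[of e] that finV finite_subset by (auto simp: card_Diff_singleton)
  have "(\<Sum>ys\<in>?L. adj_tensor k E (i # ys) * prod_list (map x ys))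
      = (\<Sum>ys\<in>?L. if set (i # ys) \<in> E then ?c * prod_list (map x ys) else 0)"
    using k by (intro sum.cong) (auto simp: adj_tensor_def)
  also have "\<dots> = (\<Sum>ys\<in>{ys\<in>?L. set (i # ys) \<in> E}. ?c * prod_list (map x ys))"
    using finV by (intro sum.inter_filter[symmetric]) (simp add: finite_lists_length_eq)
  also have "{ys\<in>?L. set (i # ys) \<in> E} = (\<Union>e\<in>?Ei. permutations_of_set (e - {i}))"
  proof (intro equalityI subsetI)
    fix ys assume "ys \<in> {ys\<in>?L. set (i # ys) \<in> E}"
    then have ys: "length ys = k - 1" "set (i # ys) \<in> E" by auto
    have "card (set (i # ys)) = length (i # ys)" using edge[OF ys(2)] ys(1) k by simp
    then have "distinct (i # ys)" by (rule card_distinct)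
    then show "ys \<in> (\<Union>e\<in>?Ei. permutations_of_set (e - {i}))"
      using ys(2) unfolding permutations_of_set_def by auto
  next
    fix ys assume "ys \<in> (\<Union>e\<in>?Ei. permutations_of_set (e - {i}))"
    then obtain e where e: "e \<in> ?Ei" "set ys = e - {i}" "distinct ys"
      unfolding permutations_of_set_def by auto
    then have "length ys = k - 1" using card_link distinct_card by metis
    moreover have "set (i # ys) = e" using e by auto
    moreover have "e \<subseteq> V" using e(1) edge by blast
    ultimately show "ys \<in> {ys\<in>?L. set (i # ys) \<in> E}" using e by auto
  qed
  also have "(\<Sum>ys\<in>(\<Union>e\<in>?Ei. permutations_of_set (e - {i})). ?c * prod_list (map x ys))
     = (\<Sum>e\<in>?Ei. \<Sum>ys\<in>permutations_of_set (e - {i}). ?c * prod_list (map x ys))"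
  proof (rule sum.UNION_disjoint)
    show "finite ?Ei" using k_uniform_hypergraph_finite_edges[OF uniform] by simp
    show "\<forall>e\<in>?Ei. \<forall>e'\<in>?Ei. e \<noteq> e' \<longrightarrow>
        permutations_of_set (e - {i}) \<inter> permutations_of_set (e' - {i}) = {}"
    proof (intro ballI impI)
      fix e e' assume "e \<in> ?Ei" "e' \<in> ?Ei" "e \<noteq> e'"
      then have "e - {i} \<noteq> e' - {i}" by auto
      then show "permutations_of_set (e - {i}) \<inter> permutations_of_set (e' - {i}) = {}"
        unfolding permutations_of_set_def by auto
    qed
  qed simp
  also have "\<dots> = (\<Sum>e\<in>?Ei. \<Sum>ys\<in>permutations_of_set (e - {i}). ?c * prod x (e - {i}))"
  proof (intro sum.cong[OF refl])
    fix e ys assume "ys \<in> permutations_of_set (e - {i})"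
    then have "distinct ys" "set ys = e - {i}" unfolding permutations_of_set_def by auto
    then show "?c * prod_list (map x ys) = ?c * prod x (e - {i})"
      using prod.distinct_set_conv_list[of ys x] by simp
  qed
  also have "\<dots> = link_sum E x i"
    unfolding link_sum_def
  proof (rule sum.cong[OF refl])
    fix e assume "e \<in> ?Ei"
    then show "(\<Sum>ys\<in>permutations_of_set (e - {i}). ?c * prod x (e - {i})) = prod x (e - {i})"
      using finite_link card_link by (simp add: card_permutations_of_set)
  qed
  finally show ?thesis .
qed

lemma A_alpha_tensor_contract:
  assumes "k_uniform_hypergraph k V E" "i \<in> V" "k \<ge> 1"
  shows "tensor_apply V k (A_alpha_tensor \<alpha> k E) (\<lambda>j. complex_of_real (x j)) i
     = complex_of_real (\<alpha> * real (hg_degree E i) * x i ^ (k - 1) + (1 - \<alpha>) * link_sum E x i)"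
proof -
  let ?L = "{ys. set ys \<subseteq> V \<and> length ys = k - 1}"
  have "finite V" using assms(1) unfolding k_uniform_hypergraph_def by auto
  have "(\<Sum>ys\<in>?L. A_alpha_tensor \<alpha> k E (i # ys) * prod_list (map x ys))
     = \<alpha> * (\<Sum>ys\<in>?L. deg_tensor k E (i # ys) * prod_list (map x ys))
       + (1 - \<alpha>) * (\<Sum>ys\<in>?L. adj_tensor k E (i # ys) * prod_list (map x ys))"
    unfolding A_alpha_tensor_def distrib_right mult.assoc sum.distrib sum_distrib_left ..
  also have "\<dots> = \<alpha> * real (hg_degree E i) * x i ^ (k - 1) + (1 - \<alpha>) * link_sum E x i"
    using deg_tensor_contract[OF \<open>finite V\<close> assms(2,3)] adj_tensor_contract[OF assms(1,3)]
    by simp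
  finally show ?thesis by (simp add: tensor_apply_of_real)
qed

lemma prod_le_power_card:
  fixes x :: "'a \<Rightarrow> real"
  assumes "\<And>a. a \<in> A \<Longrightarrow> 0 \<le> x a \<and> x a \<le> b"
  shows "prod x A \<le> b ^ card A"
  using prod_mono[of A x "\<lambda>_. b"] assms by simp

lemma power_card_le_prod:
  fixes x :: "'a \<Rightarrow> real"
  assumes "\<And>a. a \<in> A \<Longrightarrow> 0 \<le> b \<and> b \<le> x a"
  shows "b ^ card A \<le> prod x A"
  using prod_mono[of A "\<lambda>_. b" x] assms by simp

lemma prod_less_power_card:
  fixes x :: "'a \<Rightarrow> real"
  assumes "finite A" and bound: "\<And>a. a \<in> A \<Longrightarrow> 0 \<le> x a \<and> x a \<le> b"
    and "j \<in> A" "x j < b"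
  shows "prod x A < b ^ card A"
proof -
  have "0 < b" using bound[OF \<open>j \<in> A\<close>] \<open>x j < b\<close> by linarith
  have "prod x A = x j * prod x (A - {j})"
    using assms(1,3) by (rule prod.remove)
  also have "\<dots> \<le> x j * b ^ card (A - {j})"
    using bound \<open>j \<in> A\<close> by (intro mult_left_mono prod_le_power_card) auto
  also have "\<dots> < b * b ^ card (A - {j})"
    using \<open>0 < b\<close> \<open>x j < b\<close> by (intro mult_strict_right_mono) auto
  also have "\<dots> = b ^ card A"
    using card_Suc_Diff1[OF assms(1,3)] by (metis power_Suc)
  finally show ?thesis .
qed

lemma k_uniform_link:
  assumes "k_uniform_hypergraph k V E" "e \<in> E" "i \<in> e"
  shows "e - {i} \<subseteq> V" "finite (e - {i})" "card (e - {i}) = k - 1"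
proof -
  have "finite V" "e \<subseteq> V" "card e = k"
    using assms unfolding k_uniform_hypergraph_def by auto
  then show "e - {i} \<subseteq> V" "finite (e - {i})" "card (e - {i}) = k - 1"
    using assms(3) finite_subset by (auto simp: card_Diff_singleton)
qed

lemma sum_incident_edges_const:
  "(\<Sum>e\<in>{e\<in>E. i \<in> e}. c) = real (hg_degree E i) * c"
  by (simp add: hg_degree_def)

lemma link_monomial_le:
  fixes x :: "'a \<Rightarrow> real"
  assumes uniform: "k_uniform_hypergraph k V E" and bound: "\<And>j. j \<in> V \<Longrightarrow> 0 \<le> x j \<and> x j \<le> b"
    and "e \<in> E" "i \<in> e"
  shows "prod x (e - {i}) \<le> b ^ (k - 1)"
proof -
  have link: "e - {i} \<subseteq> V" "card (e - {i}) = k - 1"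
    using k_uniform_link[OF uniform assms(3,4)] by auto
  have "prod x (e - {i}) \<le> b ^ card (e - {i})"
    by (rule prod_le_power_card) (use link bound in blast)
  then show ?thesis using link by simp
qed

lemma link_monomial_ge:
  fixes x :: "'a \<Rightarrow> real"
  assumes uniform: "k_uniform_hypergraph k V E" and bound: "\<And>j. j \<in> V \<Longrightarrow> 0 \<le> b \<and> b \<le> x j"
    and "e \<in> E" "i \<in> e"
  shows "b ^ (k - 1) \<le> prod x (e - {i})"
proof -
  have link: "e - {i} \<subseteq> V" "card (e - {i}) = k - 1"
    using k_uniform_link[OF uniform assms(3,4)] by auto
  have "b ^ card (e - {i}) \<le> prod x (e - {i})"
    by (rule power_card_le_prod) (use link bound in blast)
  then show ?thesis using link by simp
qed

lemma link_sum_le: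
  assumes "k_uniform_hypergraph k V E" and "\<And>j. j \<in> V \<Longrightarrow> 0 \<le> x j \<and> x j \<le> b"
  shows "link_sum E x i \<le> real (hg_degree E i) * b ^ (k - 1)"
  unfolding link_sum_def sum_incident_edges_const[symmetric]
  using link_monomial_le[OF assms] by (intro sum_mono) simp

lemma link_sum_ge:
  assumes "k_uniform_hypergraph k V E" and "\<And>j. j \<in> V \<Longrightarrow> 0 \<le> b \<and> b \<le> x j"
  shows "real (hg_degree E i) * b ^ (k - 1) \<le> link_sum E x i"
  unfolding link_sum_def sum_incident_edges_const[symmetric]
  using link_monomial_ge[OF assms] by (intro sum_mono) simp

lemma link_sum_less:
  assumes uniform: "k_uniform_hypergraph k V E" and bound: "\<And>j. j \<in> V \<Longrightarrow> 0 \<le> x j \<and> x j \<le> b"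
    and "e \<in> E" "i \<in> e" "j \<in> e" "j \<noteq> i" "x j < b"
  shows "link_sum E x i < real (hg_degree E i) * b ^ (k - 1)"
  unfolding link_sum_def sum_incident_edges_const[symmetric]
proof (rule sum_strict_mono_ex1)
  show "finite {e\<in>E. i \<in> e}"
    using k_uniform_hypergraph_finite_edges[OF uniform] by simp
  show "\<forall>e'\<in>{e\<in>E. i \<in> e}. prod x (e' - {i}) \<le> b ^ (k - 1)"
    using link_monomial_le[OF uniform bound] by simp
  have link: "e - {i} \<subseteq> V" "finite (e - {i})" "card (e - {i}) = k - 1"
    using k_uniform_link[OF uniform \<open>e \<in> E\<close> \<open>i \<in> e\<close>] by auto
  have "prod x (e - {i}) < b ^ card (e - {i})"
    by (rule prod_less_power_card[OF link(2), of _ b j]) (use link bound assms(5-7) in auto)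
  then have "prod x (e - {i}) < b ^ (k - 1)" using link by simp
  then show "\<exists>e'\<in>{e\<in>E. i \<in> e}. prod x (e' - {i}) < b ^ (k - 1)"
    using assms(3,4) by blast
qed

lemma Holder_inequality_normalized:
  fixes a b :: "'i \<Rightarrow> real"
  assumes "finite I" and pq: "p > 1" "q > 1" "1 / p + 1 / q = 1"
    and nonneg: "\<And>i. i \<in> I \<Longrightarrow> 0 \<le> a i" "\<And>i. i \<in> I \<Longrightarrow> 0 \<le> b i"
    and normalized: "(\<Sum>i\<in>I. b i powr q) = 1"
  shows "(\<Sum>i\<in>I. a i * b i) \<le> (\<Sum>i\<in>I. a i powr p) powr (1 / p)"
proof (cases "(\<Sum>i\<in>I. a i powr p) = 0")
  case True
  then have "\<forall>i\<in>I. a i = 0"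
    using \<open>finite I\<close> by (simp add: sum_nonneg_eq_0_iff)
  then show ?thesis by simp
next
  case False
  define A where "A = (\<Sum>i\<in>I. a i powr p) powr (1 / p)"
  have "0 < A" unfolding A_def using False by (simp add: sum_nonneg)
  have "A powr p = (\<Sum>i\<in>I. a i powr p)"
    unfolding A_def using pq by (simp add: powr_powr sum_nonneg)
  have "(\<Sum>i\<in>I. a i / A * b i) \<le> (\<Sum>i\<in>I. (a i / A) powr p / p + b i powr q / q)"
    using pq nonneg \<open>0 < A\<close> by (intro sum_mono Youngs_inequality) auto
  also have "\<dots> = (\<Sum>i\<in>I. a i powr p) / A powr p / p + (\<Sum>i\<in>I. b i powr q) / q"
    using nonneg \<open>0 < A\<close> by (simp add: sum.distrib powr_divide sum_divide_distrib)
  also have "\<dots> = 1"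
    using False pq normalized \<open>A powr p = _\<close> by simp
  finally have "(\<Sum>i\<in>I. a i * b i) / A \<le> 1"
    by (simp add: sum_divide_distrib)
  then show ?thesis using \<open>0 < A\<close> unfolding A_def by (simp add: divide_le_eq)
qed

locale alpha_perron_hypergraph =
  fixes k :: nat and V :: "'a set" and E :: "'a set set" and \<alpha> :: real and x :: "'a \<Rightarrow> real"
  assumes k_ge_2: "k \<ge> 2"
    and alpha_nonneg: "0 \<le> \<alpha>" and alpha_less_1: "\<alpha> < 1"
    and uniform: "k_uniform_hypergraph k V E"
    and perron: "alpha_perron_vector \<alpha> k V E x"
begin

abbreviation deg :: "'a \<Rightarrow> real" where
  "deg i \<equiv> real (hg_degree E i)"

abbreviation "\<rho> \<equiv> rho_alpha \<alpha> k V E"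
abbreviation "xmax \<equiv> Max (x ` V)"
abbreviation "max_deg \<equiv> real (hg_max_degree V E)"

lemma finite_V: "finite V"
  using uniform unfolding k_uniform_hypergraph_def by simp

lemma edge_subset: "e \<in> E \<Longrightarrow> e \<subseteq> V"
  using uniform unfolding k_uniform_hypergraph_def by simp

lemma x_pos: "i \<in> V \<Longrightarrow> 0 < x i"
  using perron unfolding alpha_perron_vector_def by simp

lemma sum_x_power: "(\<Sum>i\<in>V. x i ^ k) = 1"
  using perron unfolding alpha_perron_vector_def by simp

lemma x_le_xmax: "i \<in> V \<Longrightarrow> x i \<le> xmax"
  using finite_V by (simp add: Max_ge)

lemma V_nonempty: "V \<noteq> {}"
  using sum_x_power by auto

lemma xmax_attained:
  obtains i where "i \<in> V" "x i = xmax"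
proof -
  have "xmax \<in> x ` V" using V_nonempty finite_V by (intro Max_in) auto
  then obtain i where "i \<in> V" "xmax = x i" by (rule imageE)
  then show ?thesis using that by simp
qed

lemma xmax_pos: "0 < xmax"
proof -
  obtain i where "i \<in> V" "x i = xmax" by (rule xmax_attained)
  then show ?thesis using x_pos by force
qed

lemma xmin_attained:
  obtains i where "i \<in> V" "\<And>j. j \<in> V \<Longrightarrow> x i \<le> x j"
proof -
  have "Min (x ` V) \<in> x ` V" using V_nonempty finite_V by (intro Min_in) auto
  then obtain i where i: "i \<in> V" "Min (x ` V) = x i" by (rule imageE)
  show ?thesis
  proof (rule that[OF i(1)])
    fix j assume "j \<in> V"
    then show "x i \<le> x j" using i(2) finite_V by (metis Min_le finite_imageI imageI)
  qed
qed

lemma deg_le_max_deg: "i \<in> V \<Longrightarrow> deg i \<le> max_deg"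
  using finite_V unfolding hg_max_degree_def by simp

lemma eigen_equation:
  assumes "i \<in> V"
  shows "\<rho> * x i ^ (k - 1) = \<alpha> * deg i * x i ^ (k - 1) + (1 - \<alpha>) * link_sum E x i"
proof -
  have "k \<ge> 1" using k_ge_2 by simp
  with assms have "complex_of_real (\<rho> * x i ^ (k - 1))
      = complex_of_real (\<alpha> * deg i * x i ^ (k - 1) + (1 - \<alpha>) * link_sum E x i)"
    using perron A_alpha_tensor_contract[OF uniform] unfolding alpha_perron_vector_def by metis
  then show ?thesis by (simp only: of_real_eq_iff)
qed

lemma eigen_equation_centered:
  "i \<in> V \<Longrightarrow>
    (\<rho> - deg i) * x i ^ (k - 1) = (1 - \<alpha>) * (link_sum E x i - deg i * x i ^ (k - 1))"
  using eigen_equation by (simp add: algebra_simps)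

lemma rho_le_degree_iff:
  assumes "i \<in> V"
  shows "\<rho> \<le> deg i \<longleftrightarrow> link_sum E x i \<le> deg i * x i ^ (k - 1)"
proof -
  have "0 < x i ^ (k - 1)" "0 < 1 - \<alpha>"
    using x_pos[OF assms] alpha_less_1 by simp_all
  then have "\<rho> \<le> deg i \<longleftrightarrow> (\<rho> - deg i) * x i ^ (k - 1) \<le> 0"
    and "link_sum E x i \<le> deg i * x i ^ (k - 1) \<longleftrightarrow>
      (1 - \<alpha>) * (link_sum E x i - deg i * x i ^ (k - 1)) \<le> 0"
    by (simp_all add: mult_le_0_iff)
  then show ?thesis using eigen_equation_centered[OF assms] by simp
qed

lemma degree_le_rho_iff:
  assumes "i \<in> V"
  shows "deg i \<le> \<rho> \<longleftrightarrow> deg i * x i ^ (k - 1) \<le> link_sum E x i"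
proof -
  have "0 < x i ^ (k - 1)" "0 < 1 - \<alpha>"
    using x_pos[OF assms] alpha_less_1 by simp_all
  then have "deg i \<le> \<rho> \<longleftrightarrow> 0 \<le> (\<rho> - deg i) * x i ^ (k - 1)"
    and "deg i * x i ^ (k - 1) \<le> link_sum E x i \<longleftrightarrow>
      0 \<le> (1 - \<alpha>) * (link_sum E x i - deg i * x i ^ (k - 1))"
    by (simp_all add: zero_le_mult_iff)
  then show ?thesis using eigen_equation_centered[OF assms] by simp
qed

lemma rho_eq_degree_iff:
  "i \<in> V \<Longrightarrow> \<rho> = deg i \<longleftrightarrow> link_sum E x i = deg i * x i ^ (k - 1)"
  using rho_le_degree_iff degree_le_rho_iff by fastforce

lemma mult_power_pred: "y * y ^ (k - 1) = y ^ k"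
  using k_ge_2 by (cases k) simp_all

lemma rayleigh_quotient:
  "\<rho> = \<alpha> * (\<Sum>i\<in>V. deg i * x i ^ k) + (1 - \<alpha>) * (\<Sum>i\<in>V. x i * link_sum E x i)"
proof -
  have "(\<Sum>i\<in>V. x i * x i ^ (k - 1)) = 1"
    using sum_x_power by (simp only: mult_power_pred)
  then have "\<rho> = \<rho> * (\<Sum>i\<in>V. x i * x i ^ (k - 1))" by simp
  also have "\<dots> = (\<Sum>i\<in>V. x i * (\<rho> * x i ^ (k - 1)))"
    by (simp add: sum_distrib_left algebra_simps)
  also have "\<dots> = (\<Sum>i\<in>V. x i * (\<alpha> * deg i * x i ^ (k - 1) + (1 - \<alpha>) * link_sum E x i))"
    using eigen_equation by simp
  also have "\<dots> = (\<Sum>i\<in>V. \<alpha> * (deg i * x i ^ k) + (1 - \<alpha>) * (x i * link_sum E x i))"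
    by (rule sum.cong[OF refl]) (simp add: algebra_simps flip: mult_power_pred)
  also have "\<dots> = \<alpha> * (\<Sum>i\<in>V. deg i * x i ^ k) + (1 - \<alpha>) * (\<Sum>i\<in>V. x i * link_sum E x i)"
    by (simp add: sum.distrib sum_distrib_left)
  finally show ?thesis .
qed

lemma degree_power_sum_le: "(\<Sum>i\<in>V. deg i * x i ^ k) \<le> max_deg"
proof -
  have "(\<Sum>i\<in>V. deg i * x i ^ k) \<le> (\<Sum>i\<in>V. max_deg * x i ^ k)"
    using deg_le_max_deg x_pos by (intro sum_mono mult_right_mono) (auto simp: less_imp_le)
  also have "\<dots> = max_deg" using sum_x_power by (simp flip: sum_distrib_left)
  finally show ?thesis .
qed

lemma x_bounds: "j \<in> V \<Longrightarrow> 0 \<le> x j \<and> x j \<le> xmax"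
  using x_pos x_le_xmax by (simp add: less_imp_le)

lemma weighted_link_sum_le:
  "(\<Sum>i\<in>V. x i * link_sum E x i) \<le> xmax ^ (k - 1) * (\<Sum>i\<in>V. deg i * x i)"
proof -
  have "(\<Sum>i\<in>V. x i * link_sum E x i) \<le> (\<Sum>i\<in>V. x i * (deg i * xmax ^ (k - 1)))"
    using link_sum_le[OF uniform x_bounds] x_pos
    by (intro sum_mono mult_left_mono) (auto simp: less_imp_le)
  then show ?thesis by (simp add: sum_distrib_left algebra_simps)
qed

lemma rho_le_bound:
  assumes "(\<Sum>i\<in>V. deg i * x i) \<le> B"
  shows "\<rho> \<le> \<alpha> * max_deg + (1 - \<alpha>) * (xmax ^ (k - 1) * B)"
proof -
  have "(\<Sum>i\<in>V. x i * link_sum E x i) \<le> xmax ^ (k - 1) * B"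
    using weighted_link_sum_le assms xmax_pos
    by (meson order_trans mult_left_mono zero_le_power less_imp_le)
  then show ?thesis
    using rayleigh_quotient degree_power_sum_le alpha_nonneg alpha_less_1
    by (smt (verit) mult_left_mono)
qed

lemma link_sum_eq_if_rho_eq_bound:
  assumes "(\<Sum>i\<in>V. deg i * x i) \<le> B" and "\<rho> = \<alpha> * max_deg + (1 - \<alpha>) * (xmax ^ (k - 1) * B)"
    and "i \<in> V"
  shows "link_sum E x i = deg i * xmax ^ (k - 1)"
proof -
  have "xmax ^ (k - 1) * (\<Sum>i\<in>V. deg i * x i) \<le> xmax ^ (k - 1) * B"
    using assms(1) xmax_pos by (simp add: mult_left_mono)
  then have tight: "xmax ^ (k - 1) * (\<Sum>i\<in>V. deg i * x i) \<le> (\<Sum>i\<in>V. x i * link_sum E x i)"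
    using assms(2) rayleigh_quotient degree_power_sum_le alpha_nonneg alpha_less_1
    by (smt (verit) mult_left_mono mult_le_cancel_left_pos)
  let ?gap = "\<lambda>i. x i * (deg i * xmax ^ (k - 1) - link_sum E x i)"
  have "sum ?gap V = 0"
    using weighted_link_sum_le tight
    by (simp add: sum_subtractf sum_distrib_left algebra_simps)
  moreover have "\<forall>j\<in>V. 0 \<le> ?gap j"
    using link_sum_le[OF uniform x_bounds] x_pos by (simp add: less_imp_le)
  ultimately have "?gap i = 0"
    using sum_nonneg_eq_0_iff[OF finite_V, of ?gap] assms(3) by simp
  then show ?thesis using x_pos[OF assms(3)] by simp
qed

lemma x_eq_xmax_if_link_sum_eq:
  assumes "i \<in> V" "link_sum E x i = deg i * xmax ^ (k - 1)"
    and "e \<in> E" "i \<in> e" "j \<in> e" "j \<noteq> i"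
  shows "x j = xmax"
proof (rule ccontr)
  assume "x j \<noteq> xmax"
  moreover have "j \<in> V" using edge_subset assms(3,5) by blast
  ultimately have "x j < xmax" using x_le_xmax by (simp add: order_less_le)
  then have "link_sum E x i < deg i * xmax ^ (k - 1)"
    using link_sum_less[OF uniform x_bounds assms(3-6)] by simp
  then show False using assms(2) by simp
qed

lemma regular_if_link_sums_eq:
  assumes link_eq: "\<And>i. i \<in> V \<Longrightarrow> link_sum E x i = deg i * xmax ^ (k - 1)"
  shows "hg_regular V E"
proof -
  have "link_sum E x i = deg i * x i ^ (k - 1)" if "i \<in> V" for i
  proof (cases "deg i = 0")
    case True
    then show ?thesis using link_eq[OF that] by simp
  next
    case False
    then have "{e\<in>E. i \<in> e} \<noteq> {}" unfolding hg_degree_def by (metis card.empty of_nat_0)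
    then obtain e where e: "e \<in> E" "i \<in> e" by blast
    then have "card e = k" using uniform unfolding k_uniform_hypergraph_def by simp
    then have "e \<noteq> {i}" using k_ge_2 by auto
    then obtain j where j: "j \<in> e" "j \<noteq> i" using e(2) by blast
    then have "j \<in> V" using edge_subset e(1) by blast
    then have "x i = xmax"
      using x_eq_xmax_if_link_sum_eq[OF _ link_eq e(1) j(1) e(2)] j(2) by simp
    then show ?thesis using link_eq[OF that] by simp
  qed
  then have "\<forall>i\<in>V. hg_degree E i = \<rho>"
    using rho_eq_degree_iff by simp
  then show ?thesis unfolding hg_regular_def by (metis of_nat_eq_iff)
qed

lemma rho_eq_degree_if_regular:
  assumes "hg_regular V E" "i \<in> V"
  shows "\<rho> = deg i"
proof -
  have same_deg: "hg_degree E j = hg_degree E i" if "j \<in> V" for j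
    using assms that unfolding hg_regular_def by blast
  obtain i0 where i0: "i0 \<in> V" "x i0 = xmax" by (rule xmax_attained)
  obtain i1 where i1: "i1 \<in> V" "\<And>j. j \<in> V \<Longrightarrow> x i1 \<le> x j"
    using xmin_attained by blast
  have "\<rho> \<le> deg i0"
    using rho_le_degree_iff[OF i0(1)] link_sum_le[OF uniform x_bounds] i0(2) by simp
  moreover have "deg i1 \<le> \<rho>"
  proof -
    have "0 \<le> x i1 \<and> x i1 \<le> x j" if "j \<in> V" for j
      using i1 x_pos[OF i1(1)] that by simp
    then show ?thesis
      using degree_le_rho_iff[OF i1(1)] link_sum_ge[OF uniform, where b = "x i1"] by simp
  qed
  ultimately show ?thesis using same_deg i0(1) i1(1) by simp
qed

lemma x_eq_xmax_if_regular:
  assumes "hg_regular V E" "hg_connected V E" "i \<in> V"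
  shows "x i = xmax"
proof -
  obtain i0 where i0: "i0 \<in> V" "x i0 = xmax" by (rule xmax_attained)
  show ?thesis
  proof (rule hg_connected_propagate[where P = "\<lambda>v. x v = xmax", OF assms(2) edge_subset i0 assms(3)])
    fix u e j assume u: "u \<in> V" "x u = xmax" and e: "e \<in> E" "u \<in> e" "j \<in> e"
    have "link_sum E x u = deg u * xmax ^ (k - 1)"
      using rho_eq_degree_iff[OF u(1)] rho_eq_degree_if_regular[OF assms(1) u(1)] u(2) by simp
    then show "x j = xmax"
      using x_eq_xmax_if_link_sum_eq[OF u(1) _ e] u(2) by blast
  qed
qed

lemma max_deg_eq_if_regular: "hg_regular V E \<Longrightarrow> i \<in> V \<Longrightarrow> max_deg = deg i"
  using max_degree_eq_if_regular[OF finite_V] by simp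

lemma card_mult_xmax_power_if_regular:
  assumes "hg_regular V E" "hg_connected V E"
  shows "real (card V) * xmax ^ k = 1"
  using sum_x_power x_eq_xmax_if_regular[OF assms] by simp

lemma sum_degree_if_regular:
  assumes "hg_regular V E"
  shows "real k * real (card E) = real (card V) * max_deg"
proof -
  have "real k * real (card E) = (\<Sum>i\<in>V. deg i)"
    using sum_hg_degree[OF uniform] by (simp flip: of_nat_sum)
  also have "\<dots> = (\<Sum>i\<in>V. max_deg)"
    using max_deg_eq_if_regular[OF assms] by simp
  also have "\<dots> = real (card V) * max_deg" by simp
  finally show ?thesis .
qed

abbreviation degree_norm :: real where
  "degree_norm \<equiv> (\<Sum>i\<in>V. deg i powr (real k / (real k - 1))) powr ((real k - 1) / real k)"

lemma weighted_degree_sum_le_edges: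
  "(\<Sum>i\<in>V. deg i * x i) \<le> xmax * (real k * real (card E))"
proof -
  have "(\<Sum>i\<in>V. deg i * x i) \<le> (\<Sum>i\<in>V. deg i * xmax)"
    using x_le_xmax by (intro sum_mono mult_left_mono) auto
  also have "\<dots> = xmax * (\<Sum>i\<in>V. deg i)"
    by (simp add: sum_distrib_left mult.commute)
  also have "(\<Sum>i\<in>V. deg i) = real k * real (card E)"
    using sum_hg_degree[OF uniform] by (simp flip: of_nat_sum)
  finally show ?thesis .
qed

lemma weighted_degree_sum_le_degree_norm:
  "(\<Sum>i\<in>V. deg i * x i) \<le> degree_norm"
proof -
  have k: "real k \<ge> 2" using k_ge_2 by simp
  have "(\<Sum>i\<in>V. x i powr real k) = 1"
    using sum_x_power x_pos by (simp add: powr_realpow)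
  then have "(\<Sum>i\<in>V. deg i * x i)
      \<le> (\<Sum>i\<in>V. deg i powr (real k / (real k - 1))) powr (1 / (real k / (real k - 1)))"
    using k x_pos
    by (intro Holder_inequality_normalized[OF finite_V]) (auto simp: field_simps less_imp_le)
  then show ?thesis by simp
qed

lemma rho_eq_bound_iff:
  assumes "(\<Sum>i\<in>V. deg i * x i) \<le> B"
    and "hg_regular V E \<Longrightarrow> xmax ^ (k - 1) * B = max_deg"
  shows "\<rho> = \<alpha> * max_deg + (1 - \<alpha>) * (xmax ^ (k - 1) * B) \<longleftrightarrow> hg_regular V E"
proof
  assume "\<rho> = \<alpha> * max_deg + (1 - \<alpha>) * (xmax ^ (k - 1) * B)"
  then show "hg_regular V E"
    using regular_if_link_sums_eq link_sum_eq_if_rho_eq_bound[OF assms(1)] by blast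
next
  assume regular: "hg_regular V E"
  obtain i where "i \<in> V" using V_nonempty by blast
  then have "\<rho> = max_deg"
    using rho_eq_degree_if_regular[OF regular] max_deg_eq_if_regular[OF regular] by simp
  then show "\<rho> = \<alpha> * max_deg + (1 - \<alpha>) * (xmax ^ (k - 1) * B)"
    using assms(2)[OF regular] by (simp add: algebra_simps)
qed

lemma edge_bound_eq_if_regular:
  assumes "hg_regular V E" "hg_connected V E"
  shows "xmax ^ (k - 1) * (xmax * (real k * real (card E))) = max_deg"
proof -
  have "xmax ^ (k - 1) * (xmax * (real k * real (card E))) = max_deg * (real (card V) * xmax ^ k)"
    using sum_degree_if_regular[OF assms(1)] mult_power_pred[of xmax] by (simp add: algebra_simps)
  then show ?thesis using card_mult_xmax_power_if_regular[OF assms] by simp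
qed

lemma degree_norm_bound_eq_if_regular:
  assumes "hg_regular V E" "hg_connected V E"
  shows "xmax ^ (k - 1) * degree_norm = max_deg"
proof -
  define p where "p = real k / (real k - 1)"
  define q where "q = (real k - 1) / real k"
  have pq: "p * q = 1" and kq: "real k * q = real (k - 1)"
    using k_ge_2 unfolding p_def q_def by (auto simp: field_simps of_nat_diff)
  have "(\<Sum>i\<in>V. deg i powr p) = (\<Sum>i\<in>V. max_deg powr p)"
    using max_deg_eq_if_regular[OF assms(1)] by (intro sum.cong) simp_all
  then have "(\<Sum>i\<in>V. deg i powr p) = real (card V) * max_deg powr p" by simp
  then have "degree_norm = real (card V) powr q * max_deg"
    unfolding p_def[symmetric] q_def[symmetric]
    using pq by (simp add: powr_mult powr_powr)
  moreover have "real (card V) powr q * xmax ^ (k - 1) = 1"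
  proof -
    have "xmax ^ (k - 1) = (xmax ^ k) powr q"
      using xmax_pos kq by (simp add: powr_realpow powr_powr flip: powr_realpow)
    then have "real (card V) powr q * xmax ^ (k - 1) = (real (card V) * xmax ^ k) powr q"
      by (simp add: powr_mult)
    then show ?thesis using card_mult_xmax_power_if_regular[OF assms] by simp
  qed
  ultimately show ?thesis by (simp add: algebra_simps)
qed

lemma rho_le_edge_bound:
  "\<rho> \<le> \<alpha> * max_deg + (1 - \<alpha>) * real k * real (card E) * xmax ^ k"
  using rho_le_bound[OF weighted_degree_sum_le_edges] mult_power_pred[of xmax]
  by (simp add: algebra_simps)

lemma rho_le_degree_norm_bound:
  "\<rho> \<le> \<alpha> * max_deg + (1 - \<alpha>) * degree_norm * xmax ^ (k - 1)"
  using rho_le_bound[OF weighted_degree_sum_le_degree_norm] by (simp add: algebra_simps)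

lemma rho_eq_edge_bound_iff:
  assumes "hg_connected V E"
  shows "\<rho> = \<alpha> * max_deg + (1 - \<alpha>) * real k * real (card E) * xmax ^ k \<longleftrightarrow> hg_regular V E"
  using rho_eq_bound_iff[OF weighted_degree_sum_le_edges edge_bound_eq_if_regular[OF _ assms]]
    mult_power_pred[of xmax]
  by (simp add: algebra_simps)

lemma rho_eq_degree_norm_bound_iff:
  assumes "hg_connected V E"
  shows "\<rho> = \<alpha> * max_deg + (1 - \<alpha>) * degree_norm * xmax ^ (k - 1) \<longleftrightarrow> hg_regular V E"
  using rho_eq_bound_iff[OF weighted_degree_sum_le_degree_norm
      degree_norm_bound_eq_if_regular[OF _ assms]]
  by (simp add: algebra_simps)

end

theorem theorem3p2:
  fixes V :: "'a set" and E :: "'a set set" and k :: nat and \<alpha> :: real and x :: "'a \<Rightarrow> real"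
  assumes "k \<ge> 2" and "0 \<le> \<alpha>" and "\<alpha> < 1"
    and "k_uniform_hypergraph k V E" and "hg_connected V E"
    and "alpha_perron_vector \<alpha> k V E x"
  defines "xbar \<equiv> Max (x ` V)"
    and "m \<equiv> card E"
    and "\<Delta> \<equiv> hg_max_degree V E"
  shows "(rho_alpha \<alpha> k V E \<le> \<alpha> * real \<Delta> + (1 - \<alpha>) * real k * real m * xbar ^ k)
    \<and> (rho_alpha \<alpha> k V E \<le> \<alpha> * real \<Delta> + (1 - \<alpha>) *
           ((\<Sum>i\<in>V. real (hg_degree E i) powr (real k / (real k - 1))) powr ((real k - 1) / real k))
           * xbar ^ (k - 1))
    \<and> (rho_alpha \<alpha> k V E = \<alpha> * real \<Delta> + (1 - \<alpha>) * real k * real m * xbar ^ k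
           \<longleftrightarrow> hg_regular V E)
    \<and> (rho_alpha \<alpha> k V E = \<alpha> * real \<Delta> + (1 - \<alpha>) *
           ((\<Sum>i\<in>V. real (hg_degree E i) powr (real k / (real k - 1))) powr ((real k - 1) / real k))
           * xbar ^ (k - 1) \<longleftrightarrow> hg_regular V E)"
proof -
  interpret alpha_perron_hypergraph k V E \<alpha> x
    using assms(1-4,6) by unfold_locales
  show ?thesis
    unfolding xbar_def m_def \<Delta>_def
    using rho_le_edge_bound rho_le_degree_norm_bound
      rho_eq_edge_bound_iff[OF assms(5)] rho_eq_degree_norm_bound_iff[OF assms(5)]
    by blast
qed

end
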